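(* Let $N\in\mathbb{N}$, let $x_1,\dots,x_N\in\mathbb{R}^3$ be distinct points and let $\alpha_1,\dots,\alpha_N\in\mathbb{R}$ satisfy (A1) $\alpha_n>0$ for all $n$, and (A2) $\sum_{m\neq n}\frac{1}{(4\pi\alpha_m)^2|x_m-x_n|^2}<1$. Then for every $z\in\mathbb{C}\setminus[0,+\infty)$ the matrix $\Gamma_N^z$ is invertible, and $\Gamma_N^z$ extends continuously to two (distinct) invertible matrices as $z$ approaches the cut $[0,+\infty)$ from above and from below. Furthermore, $(\Gamma_N^z)^{-1}$ and its boundary extensions admit the absolutely convergent Neumann series representation $$(\Gamma_N^z)^{-1}=\sum_{j=0}^\infty\big[(V_N^z)^{-1}P_N^z\big]^j(V_N^z)^{-1},$$ where $[V_N^z]_{mn}:=(\alpha_n-\frac{i\sqrt z}{4\pi})\delta_{mn}$ and $[P_N^z]_{mn}:=\frac{e^{i\sqrt z|x_m-x_n|}}{4\pi|x_m-x_n|}(1-\delta_{mn})$ (with the corresponding boundary values on the cut).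
   Context: For $z\in\mathbb{C}\setminus[0,+\infty)$, $\sqrt{z}$ denotes the branch with $\Im\sqrt z>0$ (on the cut $z=v^2$, $v>0$, the boundary values are $\sqrt z\to v$ from above and $\sqrt z\to-v$ from below). $\Gamma_N^z$ is the $N\times N$ matrix with entries $[\Gamma_N^z]_{mn}=(\alpha_n-\frac{i\sqrt z}{4\pi})\delta_{mn}-\frac{e^{i\sqrt z|x_m-x_n|}}{4\pi|x_m-x_n|}(1-\delta_{mn})$, where the off-diagonal term is understood to vanish for $m=n$. *)

theory Defs
  imports "HOL-Analysis.Analysis"
begin

text \<open>Branch of the square root with positive imaginary part on the complement
of the cut [0,+inf): sqrt z = i * csqrt(-z).\<close>
definition sqrtIm :: "complex \<Rightarrow> complex" where
  "sqrtIm z = \<i> * csqrt (- z)"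

text \<open>The matrices as functions of k (= sqrt z, or its boundary value +-v on the cut).\<close>
definition VK :: "('n::finite \<Rightarrow> real) \<Rightarrow> complex \<Rightarrow> complex^'n^'n" where
  "VK \<alpha> k = (\<chi> m n. if m = n then of_real (\<alpha> n) - \<i> * k / (4 * of_real pi) else 0)"

definition PK :: "('n::finite \<Rightarrow> real^3) \<Rightarrow> complex \<Rightarrow> complex^'n^'n" where
  "PK x k = (\<chi> m n. if m = n then 0
     else exp (\<i> * k * of_real (dist (x m) (x n))) / (4 * of_real pi * of_real (dist (x m) (x n))))"

definition GammaK :: "('n::finite \<Rightarrow> real) \<Rightarrow> ('n \<Rightarrow> real^3) \<Rightarrow> complex \<Rightarrow> complex^'n^'n" where
  "GammaK \<alpha> x k = VK \<alpha> k - PK x k"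

definition Gamma :: "('n::finite \<Rightarrow> real) \<Rightarrow> ('n \<Rightarrow> real^3) \<Rightarrow> complex \<Rightarrow> complex^'n^'n" where
  "Gamma \<alpha> x z = GammaK \<alpha> x (sqrtIm z)"

definition V :: "('n::finite \<Rightarrow> real) \<Rightarrow> complex \<Rightarrow> complex^'n^'n" where
  "V \<alpha> z = VK \<alpha> (sqrtIm z)"

definition P :: "('n::finite \<Rightarrow> real^3) \<Rightarrow> complex \<Rightarrow> complex^'n^'n" where
  "P x z = PK x (sqrtIm z)"

text \<open>Matrix powers (note: * on vec is componentwise, so we use **).\<close>
primrec mpow :: "'a::comm_ring_1^'n::finite^'n \<Rightarrow> nat \<Rightarrow> 'a^'n^'n" where
  "mpow A 0 = mat 1"
| "mpow A (Suc j) = A ** mpow A j"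

definition neumann_term :: "complex^'n::finite^'n \<Rightarrow> complex^'n^'n \<Rightarrow> nat \<Rightarrow> complex^'n^'n" where
  "neumann_term Vm Pm j = mpow (matrix_inv Vm ** Pm) j ** matrix_inv Vm"

definition neumann_rep :: "complex^'n::finite^'n \<Rightarrow> complex^'n^'n \<Rightarrow> complex^'n^'n \<Rightarrow> bool" where
  "neumann_rep G Vm Pm \<longleftrightarrow> invertible G \<and> summable (\<lambda>j. norm (neumann_term Vm Pm j))
     \<and> matrix_inv G = (\<Sum>j. neumann_term Vm Pm j)"

end

(*
  Write Gamma = V - P with V diagonal, as functions of the spectral parameter k = sqrt z.
  For Im k >= 0 every diagonal entry of V has real part at least alpha_n > 0 and
  |exp (i k d)| <= 1, so the Frobenius norm of V^-1 P is at most the square root of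
  the sum in (A2), hence < 1.  The Frobenius norm is submultiplicative, so the Neumann
  series converges absolutely and telescopes to an inverse of V - P.  The estimate is
  uniform on the closed upper half-plane Im k >= 0, which contains both boundary values
  k = v and k = -v; the boundary limits follow from continuity of Gamma in k and
  sqrt z -> v resp. -v from above resp. below the cut.
*)
theory Submission
  imports Defs
begin

lemma norm_matrix_power2:
  fixes A :: "'a::real_normed_vector^'n^'m"
  shows "(norm A)\<^sup>2 = (\<Sum>i\<in>UNIV. \<Sum>j\<in>UNIV. (norm (A $ i $ j))\<^sup>2)"
  by (simp add: norm_vec_def L2_set_def sum_nonneg)

lemma norm_matrix_mult_le:
  fixes A :: "'a::real_normed_algebra_1^'n^'m" and B :: "'a^'p^'n"
  shows "norm (A ** B) \<le> norm A * norm B"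
proof -
  have entry: "(norm ((A ** B) $ i $ j))\<^sup>2 \<le> (\<Sum>k\<in>UNIV. (norm (A $ i $ k))\<^sup>2) * (\<Sum>k\<in>UNIV. (norm (B $ k $ j))\<^sup>2)"
    for i j
  proof -
    have "norm ((A ** B) $ i $ j) \<le> (\<Sum>k\<in>UNIV. \<bar>norm (A $ i $ k)\<bar> * \<bar>norm (B $ k $ j)\<bar>)"
      unfolding matrix_matrix_mult_def
      by (auto intro!: order_trans[OF norm_sum] sum_mono norm_mult_ineq)
    also have "\<dots> \<le> L2_set (\<lambda>k. norm (A $ i $ k)) UNIV * L2_set (\<lambda>k. norm (B $ k $ j)) UNIV"
      by (rule L2_set_mult_ineq)
    finally have "norm ((A ** B) $ i $ j) \<le> sqrt ((\<Sum>k\<in>UNIV. (norm (A $ i $ k))\<^sup>2) * (\<Sum>k\<in>UNIV. (norm (B $ k $ j))\<^sup>2))"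
      by (simp add: L2_set_def real_sqrt_mult)
    from power_mono[OF this, of 2] show ?thesis
      by (simp add: sum_nonneg)
  qed
  have "(norm (A ** B))\<^sup>2 \<le> (\<Sum>i\<in>UNIV. \<Sum>j\<in>UNIV. (\<Sum>k\<in>UNIV. (norm (A $ i $ k))\<^sup>2) * (\<Sum>k\<in>UNIV. (norm (B $ k $ j))\<^sup>2))"
    unfolding norm_matrix_power2 by (intro sum_mono entry)
  also have "\<dots> = (\<Sum>i\<in>UNIV. \<Sum>k\<in>UNIV. (norm (A $ i $ k))\<^sup>2) * (\<Sum>j\<in>UNIV. \<Sum>k\<in>UNIV. (norm (B $ k $ j))\<^sup>2)"
    by (rule sum_product[symmetric])
  also have "\<dots> = (norm A * norm B)\<^sup>2"
    unfolding power_mult_distrib norm_matrix_power2 by (subst (2) sum.swap) (rule refl)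
  finally show ?thesis
    by (rule power2_le_imp_le) simp
qed

lemma matrix_diff_rdistrib:
  fixes A B :: "'a::ring_1^'n^'m" and C :: "'a^'p^'n"
  shows "(A - B) ** C = A ** C - B ** C"
  by (simp add: vec_eq_iff matrix_matrix_mult_def sum_subtractf left_diff_distrib)

lemma bounded_linear_matrix_mult_left:
  fixes A :: "'a::real_normed_algebra_1^'n^'m"
  shows "bounded_linear (\<lambda>B::'a^'p^'n. A ** B)"
proof (rule bounded_linear_intro[where K = "norm A"])
  show "A ** (B + C) = A ** B + A ** C" for B C
    by (rule matrix_add_ldistrib)
  show "A ** (r *\<^sub>R B) = r *\<^sub>R (A ** B)" for r B
    by (simp add: matrix_scalar_ac scalar_matrix_assoc)
  show "norm (A ** B) \<le> norm B * norm A" for B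
    using norm_matrix_mult_le[of A B] by (simp add: mult.commute)
qed

lemma matrix_inv_inverse:
  assumes "invertible A"
  shows "A ** matrix_inv A = mat 1" "matrix_inv A ** A = mat 1"
proof -
  have "A ** matrix_inv A = mat 1 \<and> matrix_inv A ** A = mat 1"
    unfolding matrix_inv_def by (rule someI_ex) (use assms in \<open>simp add: invertible_def\<close>)
  then show "A ** matrix_inv A = mat 1" "matrix_inv A ** A = mat 1"
    by auto
qed

lemma matrix_inv_unique:
  fixes A B :: "'a::field^'n^'n"
  assumes AB: "A ** B = mat 1"
  shows "invertible A" "matrix_inv A = B"
proof -
  show inv: "invertible A"
    using AB matrix_left_right_inverse unfolding invertible_def by blast
  have "matrix_inv A = matrix_inv A ** (A ** B)"
    by (simp add: AB)
  also have "\<dots> = B"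
    by (simp add: matrix_mul_assoc matrix_inv_inverse(2)[OF inv])
  finally show "matrix_inv A = B" .
qed

lemma norm_mpow_mult_le:
  fixes A :: "'a::real_normed_field^'n^'n" and B :: "'a^'p^'n"
  shows "norm (mpow A j ** B) \<le> norm A ^ j * norm B"
proof (induction j)
  case 0
  then show ?case by simp
next
  case (Suc j)
  have "norm (mpow A (Suc j) ** B) = norm (A ** (mpow A j ** B))"
    by (simp add: matrix_mul_assoc)
  also have "\<dots> \<le> norm A * norm (mpow A j ** B)"
    by (rule norm_matrix_mult_le)
  also have "\<dots> \<le> norm A * (norm A ^ j * norm B)"
    by (intro mult_left_mono Suc.IH norm_ge_zero)
  finally show ?case
    by (simp add: mult.assoc)
qed

lemma norm_neumann_term_le:
  "norm (neumann_term W K j) \<le> norm (matrix_inv W ** K) ^ j * norm (matrix_inv W)"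
  unfolding neumann_term_def by (rule norm_mpow_mult_le)

lemma summable_norm_neumann_term:
  fixes W K :: "complex^'n::finite^'n"
  assumes "norm (matrix_inv W ** K) < 1"
  shows "summable (\<lambda>j. norm (neumann_term W K j))"
proof (rule summable_comparison_test')
  show "summable (\<lambda>j. norm (matrix_inv W ** K) ^ j * norm (matrix_inv W))"
    using assms by (intro summable_mult2 summable_geometric) simp
  show "norm (norm (neumann_term W K j)) \<le> norm (matrix_inv W ** K) ^ j * norm (matrix_inv W)" for j
    using norm_neumann_term_le[of W K j] by simp
qed

lemma neumann_rep_diff:
  fixes W K :: "complex^'n::finite^'n"
  assumes W: "invertible W" and small: "norm (matrix_inv W ** K) < 1"
  shows "neumann_rep (W - K) W K"
proof -
  define T where "T = neumann_term W K"
  have summable_norm: "summable (\<lambda>j. norm (T j))"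
    unfolding T_def by (rule summable_norm_neumann_term[OF small])
  then have summable: "summable T"
    by (rule summable_norm_cancel)
  define f where "f j = W ** T j" for j
  have K_T: "K ** T j = f (Suc j)" for j
  proof -
    have "K = W ** (matrix_inv W ** K)"
      by (simp add: matrix_mul_assoc matrix_inv_inverse(1)[OF W])
    then show ?thesis
      by (simp add: f_def T_def neumann_term_def matrix_mul_assoc)
  qed
  have "(W - K) ** T j = f j - f (Suc j)" for j
    by (simp add: matrix_diff_rdistrib f_def K_T)
  moreover have "f \<longlonglongrightarrow> 0"
    unfolding f_def
    by (rule bounded_linear.tendsto_zero[OF bounded_linear_matrix_mult_left summable_LIMSEQ_zero[OF summable]])
  then have "(\<lambda>j. f j - f (Suc j)) sums (f 0 - 0)"
    by (rule telescope_sums')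
  moreover have "f 0 = mat 1"
    by (simp add: f_def T_def neumann_term_def matrix_inv_inverse(1)[OF W])
  ultimately have "(\<lambda>j. (W - K) ** T j) sums mat 1"
    by simp
  moreover have "(\<lambda>j. (W - K) ** T j) sums ((W - K) ** suminf T)"
    by (rule bounded_linear.sums[OF bounded_linear_matrix_mult_left summable_sums[OF summable]])
  ultimately have "(W - K) ** suminf T = mat 1"
    using sums_unique2 by blast
  with summable_norm show ?thesis
    unfolding neumann_rep_def T_def using matrix_inv_unique by blast
qed

definition diag_matrix :: "('n::finite \<Rightarrow> 'a::zero) \<Rightarrow> 'a^'n^'n" where
  "diag_matrix d = (\<chi> i j. if i = j then d j else 0)"

lemma diag_matrix_mult_nth:
  fixes d :: "'n::finite \<Rightarrow> 'a::semiring_1" and A :: "'a^'p^'n"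
  shows "(diag_matrix d ** A) $ i $ j = d i * A $ i $ j"
  by (simp add: diag_matrix_def matrix_matrix_mult_def if_distrib if_distribR sum.delta cong: if_cong)

lemma matrix_inv_diag_matrix:
  fixes d :: "'n::finite \<Rightarrow> 'a::field"
  assumes "\<And>i. d i \<noteq> 0"
  shows "invertible (diag_matrix d)" "matrix_inv (diag_matrix d) = diag_matrix (\<lambda>i. inverse (d i))"
proof -
  have "diag_matrix d ** diag_matrix (\<lambda>i. inverse (d i)) = mat 1"
    using assms by (simp add: vec_eq_iff diag_matrix_mult_nth) (simp add: diag_matrix_def mat_def)
  then show "invertible (diag_matrix d)" "matrix_inv (diag_matrix d) = diag_matrix (\<lambda>i. inverse (d i))"
    by (rule matrix_inv_unique)+
qed

definition VK_diag :: "('n \<Rightarrow> real) \<Rightarrow> complex \<Rightarrow> 'n \<Rightarrow> complex" where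
  "VK_diag \<alpha> k n = of_real (\<alpha> n) - \<i> * k / (4 * of_real pi)"

lemma VK_eq_diag_matrix: "VK \<alpha> k = diag_matrix (VK_diag \<alpha> k)"
  by (simp add: VK_def diag_matrix_def VK_diag_def vec_eq_iff)

lemma norm_VK_diag_ge:
  assumes "0 \<le> Im k"
  shows "\<alpha> n \<le> norm (VK_diag \<alpha> k n)"
proof -
  have "\<alpha> n \<le> Re (VK_diag \<alpha> k n)"
    using assms by (simp add: VK_diag_def Re_divide)
  then show ?thesis
    using complex_Re_le_cmod order_trans by blast
qed

lemma invertible_VK:
  assumes "\<And>n. 0 < \<alpha> n" and "0 \<le> Im k"
  shows "invertible (VK \<alpha> k)" "matrix_inv (VK \<alpha> k) = diag_matrix (\<lambda>n. inverse (VK_diag \<alpha> k n))"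
proof -
  have "VK_diag \<alpha> k n \<noteq> 0" for n
    using norm_VK_diag_ge[OF assms(2), of \<alpha> n] assms(1)[of n] by auto
  then show "invertible (VK \<alpha> k)" "matrix_inv (VK \<alpha> k) = diag_matrix (\<lambda>n. inverse (VK_diag \<alpha> k n))"
    unfolding VK_eq_diag_matrix by (rule matrix_inv_diag_matrix)+
qed

lemma norm_PK_le:
  assumes "0 \<le> Im k"
  shows "norm (PK x k $ m $ n) \<le> 1 / (4 * pi * dist (x m) (x n))"
proof (cases "m = n")
  case False
  have "norm (PK x k $ m $ n) = norm (exp (\<i> * k * of_real (dist (x m) (x n)))) / (4 * pi * dist (x m) (x n))"
    using False by (simp add: PK_def norm_divide norm_mult)
  also have "\<dots> \<le> 1 / (4 * pi * dist (x m) (x n))"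
    using assms by (intro divide_right_mono) (simp_all add: norm_exp_eq_Re)
  finally show ?thesis .
qed (simp add: PK_def)

lemma norm_PK_div_VK_diag_le:
  assumes "0 < \<alpha> m" and "0 \<le> Im k"
  shows "norm (PK x k $ m $ n / VK_diag \<alpha> k m) \<le> 1 / (4 * pi * \<alpha> m * dist (x m) (x n))"
proof -
  have "norm (PK x k $ m $ n / VK_diag \<alpha> k m) \<le> (1 / (4 * pi * dist (x m) (x n))) / \<alpha> m"
    unfolding norm_divide
    by (rule frac_le) (use assms norm_PK_le norm_VK_diag_ge in auto)
  then show ?thesis
    by (simp add: field_simps)
qed

lemma norm_matrix_inv_VK_PK_less_1:
  assumes pos: "\<And>n. 0 < \<alpha> n"
    and small: "(\<Sum>(m, n) \<in> {(m, n). m \<noteq> n}. 1 / ((4 * pi * \<alpha> m)\<^sup>2 * (dist (x m) (x n))\<^sup>2)) < 1"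
    and k: "0 \<le> Im k"
  shows "norm (matrix_inv (VK \<alpha> k) ** PK x k) < 1"
proof -
  define M where "M = matrix_inv (VK \<alpha> k) ** PK x k"
  have M_nth: "M $ m $ n = PK x k $ m $ n / VK_diag \<alpha> k m" for m n
    by (simp add: M_def invertible_VK(2)[OF pos k] diag_matrix_mult_nth divide_inverse mult.commute)
  have "(norm M)\<^sup>2 = (\<Sum>(m, n)\<in>UNIV. (norm (M $ m $ n))\<^sup>2)"
    by (simp add: norm_matrix_power2 sum.cartesian_product)
  also have "\<dots> = (\<Sum>(m, n) \<in> {(m, n). m \<noteq> n}. (norm (M $ m $ n))\<^sup>2)"
    by (rule sum.mono_neutral_right) (auto simp: M_nth PK_def)
  also have "\<dots> \<le> (\<Sum>(m, n) \<in> {(m, n). m \<noteq> n}. 1 / ((4 * pi * \<alpha> m)\<^sup>2 * (dist (x m) (x n))\<^sup>2))"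
  proof (rule sum_mono, clarify)
    fix m n
    have "(norm (M $ m $ n))\<^sup>2 \<le> (1 / (4 * pi * \<alpha> m * dist (x m) (x n)))\<^sup>2"
      unfolding M_nth by (intro power_mono norm_PK_div_VK_diag_le pos k norm_ge_zero)
    then show "(norm (M $ m $ n))\<^sup>2 \<le> 1 / ((4 * pi * \<alpha> m)\<^sup>2 * (dist (x m) (x n))\<^sup>2)"
      by (simp add: power_divide power_mult_distrib)
  qed
  also have "\<dots> < 1"
    by (rule small)
  finally show ?thesis
    by (simp add: M_def abs_square_less_1)
qed

lemma neumann_rep_GammaK:
  assumes "\<And>n. 0 < \<alpha> n"
    and "(\<Sum>(m, n) \<in> {(m, n). m \<noteq> n}. 1 / ((4 * pi * \<alpha> m)\<^sup>2 * (dist (x m) (x n))\<^sup>2)) < 1"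
    and "0 \<le> Im k"
  shows "neumann_rep (GammaK \<alpha> x k) (VK \<alpha> k) (PK x k)"
  unfolding GammaK_def
  using neumann_rep_diff invertible_VK(1) norm_matrix_inv_VK_PK_less_1 assms by blast

lemma GammaK_nth:
  "GammaK \<alpha> x k $ m $ n = (if m = n then VK_diag \<alpha> k n
     else - (exp (\<i> * k * of_real (dist (x m) (x n))) / (4 * of_real pi * of_real (dist (x m) (x n)))))"
  by (simp add: GammaK_def VK_eq_diag_matrix diag_matrix_def PK_def)

lemma GammaK_boundary_values_differ:
  assumes "0 < v"
  shows "GammaK \<alpha> x (of_real v) \<noteq> GammaK \<alpha> x (- of_real v)"
proof
  fix n
  assume "GammaK \<alpha> x (of_real v) = GammaK \<alpha> x (- of_real v)"
  then have "Im (GammaK \<alpha> x (of_real v) $ n $ n) = Im (GammaK \<alpha> x (- of_real v) $ n $ n)"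
    by simp
  with assms show False
    by (simp add: GammaK_nth VK_diag_def Im_divide)
qed

lemma isCont_GammaK: "isCont (GammaK \<alpha> x) k"
proof -
  have "continuous_on UNIV (\<lambda>k. GammaK \<alpha> x k $ m $ n)" for m n
  proof (cases "m = n")
    case True
    show ?thesis
      unfolding GammaK_nth if_P[OF True] VK_diag_def divide_inverse
      by (intro continuous_on_diff continuous_on_mult_right continuous_on_mult_left continuous_on_id
          continuous_on_const)
  next
    case False
    show ?thesis
      unfolding GammaK_nth if_not_P[OF False] divide_inverse
      by (intro continuous_on_minus continuous_on_mult_right continuous_on_exp continuous_on_mult_left
          continuous_on_id)
  qed
  then have "continuous_on UNIV (\<lambda>k. \<chi> m n. GammaK \<alpha> x k $ m $ n)"
    by (intro continuous_on_vec_lambda)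
  then show ?thesis
    by (simp add: continuous_on_eq_continuous_at)
qed

lemma Im_sqrtIm_nonneg: "0 \<le> Im (sqrtIm z)"
  using Re_csqrt[of "- z"] by (simp add: sqrtIm_def del: csqrt.simps)

lemma sqrtIm_upper: "0 < Im z \<Longrightarrow> sqrtIm z = csqrt z"
  using csqrt_minus[of "- z"] by (simp add: sqrtIm_def)

lemma sqrtIm_lower: "Im z < 0 \<Longrightarrow> sqrtIm z = - csqrt z"
  using csqrt_minus[of z] by (simp add: sqrtIm_def)

lemma tendsto_csqrt_of_real_power2:
  assumes "0 \<le> v"
  shows "(csqrt \<longlongrightarrow> of_real v) (at (of_real (v\<^sup>2)))"
proof (cases "v = 0")
  case True
  have "((\<lambda>z. sqrt (norm z)) \<longlongrightarrow> 0) (at (0::complex))"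
    by (auto intro!: tendsto_eq_intros)
  then show ?thesis
    using True by (simp add: tendsto_norm_zero_iff flip: norm_csqrt)
next
  case False
  with assms have "of_real (v\<^sup>2) \<notin> \<real>\<^sub>\<le>\<^sub>0"
    by (simp add: complex_nonpos_Reals_iff del: of_real_power)
  then have "isCont csqrt (of_real (v\<^sup>2))"
    by (rule continuous_at_csqrt)
  with assms show ?thesis
    by (simp add: isCont_def flip: of_real_sqrt)
qed

lemma tendsto_sqrtIm_upper:
  assumes "0 \<le> v"
  shows "(sqrtIm \<longlongrightarrow> of_real v) (at (of_real (v\<^sup>2)) within {z. 0 < Im z})"
proof (rule tendsto_cong[THEN iffD1])
  show "\<forall>\<^sub>F z in at (of_real (v\<^sup>2)) within {z. 0 < Im z}. csqrt z = sqrtIm z"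
    unfolding eventually_at_filter by (rule always_eventually) (simp add: sqrtIm_upper)
  show "(csqrt \<longlongrightarrow> of_real v) (at (of_real (v\<^sup>2)) within {z. 0 < Im z})"
    using tendsto_csqrt_of_real_power2[OF assms] by (rule tendsto_within_subset) simp
qed

lemma tendsto_sqrtIm_lower:
  assumes "0 \<le> v"
  shows "(sqrtIm \<longlongrightarrow> - of_real v) (at (of_real (v\<^sup>2)) within {z. Im z < 0})"
proof (rule tendsto_cong[THEN iffD1])
  show "\<forall>\<^sub>F z in at (of_real (v\<^sup>2)) within {z. Im z < 0}. - csqrt z = sqrtIm z"
    unfolding eventually_at_filter by (rule always_eventually) (simp add: sqrtIm_lower)
  show "((\<lambda>z. - csqrt z) \<longlongrightarrow> - of_real v) (at (of_real (v\<^sup>2)) within {z. Im z < 0})"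
    using tendsto_minus[OF tendsto_csqrt_of_real_power2[OF assms]] by (rule tendsto_within_subset) simp
qed

theorem lemma3p1:
  fixes x :: "'n::finite \<Rightarrow> real^3" and \<alpha> :: "'n \<Rightarrow> real"
  assumes distinct: "inj x"
    and A1: "\<And>n. \<alpha> n > 0"
    and A2: "(\<Sum>(m, n) \<in> {(m, n). m \<noteq> n}.
               1 / ((4 * pi * \<alpha> m)\<^sup>2 * (dist (x m) (x n))\<^sup>2)) < 1"
  shows "(\<forall>z. z \<notin> {of_real t | t. t \<ge> 0} \<longrightarrow>
            neumann_rep (Gamma \<alpha> x z) (V \<alpha> z) (P x z))
    \<and> (\<forall>v::real. v \<ge> 0 \<longrightarrow>
          ((Gamma \<alpha> x \<longlongrightarrow> GammaK \<alpha> x (of_real v)) (at (of_real (v\<^sup>2)) within {z. Im z > 0}))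
        \<and> ((Gamma \<alpha> x \<longlongrightarrow> GammaK \<alpha> x (- of_real v)) (at (of_real (v\<^sup>2)) within {z. Im z < 0}))
        \<and> neumann_rep (GammaK \<alpha> x (of_real v)) (VK \<alpha> (of_real v)) (PK x (of_real v))
        \<and> neumann_rep (GammaK \<alpha> x (- of_real v)) (VK \<alpha> (- of_real v)) (PK x (- of_real v)))
    \<and> (\<forall>v::real. v > 0 \<longrightarrow> GammaK \<alpha> x (of_real v) \<noteq> GammaK \<alpha> x (- of_real v))"
proof -
  have Gamma_eq: "Gamma \<alpha> x = (\<lambda>z. GammaK \<alpha> x (sqrtIm z))"
    by (simp add: fun_eq_iff Gamma_def)
  have off_cut: "neumann_rep (Gamma \<alpha> x z) (V \<alpha> z) (P x z)" for z
    unfolding Gamma_def V_def P_def using A1 A2 Im_sqrtIm_nonneg by (rule neumann_rep_GammaK)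
  have on_cut: "neumann_rep (GammaK \<alpha> x k) (VK \<alpha> k) (PK x k)" if "Im k = 0" for k
    using A1 A2 by (rule neumann_rep_GammaK) (simp add: that)
  have upper: "(Gamma \<alpha> x \<longlongrightarrow> GammaK \<alpha> x (of_real v)) (at (of_real (v\<^sup>2)) within {z. Im z > 0})"
    if "0 \<le> v" for v
    unfolding Gamma_eq by (rule isCont_tendsto_compose[OF isCont_GammaK tendsto_sqrtIm_upper[OF that]])
  have lower: "(Gamma \<alpha> x \<longlongrightarrow> GammaK \<alpha> x (- of_real v)) (at (of_real (v\<^sup>2)) within {z. Im z < 0})"
    if "0 \<le> v" for v
    unfolding Gamma_eq by (rule isCont_tendsto_compose[OF isCont_GammaK tendsto_sqrtIm_lower[OF that]])
  show ?thesis
    by (intro conjI allI impI off_cut on_cut upper lower GammaK_boundary_values_differ) simp_all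
qed

end
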